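(* Let $\phi$ be an entanglement-breaking channel acting on $d\times d$ complex matrices. Suppose there exists a positive semidefinite matrix $A\ge 0$ with $\operatorname{rk}A=r<d$ such that $s=\operatorname{rk}\phi(A)$ satisfies $r^2+s^2<2dr$. Then the kernel of $\phi$ (as a linear map on $\mathcal M(d;\mathbb C)$) satisfies $$\dim\ker\phi\ \ge\ 2dr-r^2-s^2\ >\ 0 .$$
   Context: A quantum channel is a completely positive, trace-preserving linear map on $\mathcal M(d;\mathbb C)$. It is entanglement-breaking (EB) if for every system $B$ and every state $\rho_{AB}$ the output $(\phi\otimes I)(\rho_{AB})$ is separable; equivalently, $\phi$ can be written as $\phi(X)=\sum_i\rho_i\operatorname{Tr}[E_iX]$ with density matrices $\rho_i$ and positive operators $E_i$ summing to $\mathbb 1$. *)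

theory Defs
  imports "HOL-Analysis.Analysis"
begin

text \<open>Complex d x d matrices are represented as complex^'n^'n, with d = CARD('n).\<close>

definition mscale :: "complex \<Rightarrow> complex^'n^'m \<Rightarrow> complex^'n^'m" where
  "mscale c A = (\<chi> i j. c * A$i$j)"

definition cdim :: "(complex^'n^'m) set \<Rightarrow> nat" where
  "cdim S = vector_space.dim mscale S"

definition hermitian :: "complex^'n^'n \<Rightarrow> bool" where
  "hermitian A \<longleftrightarrow> (\<forall>i j. A$i$j = cnj (A$j$i))"

definition psd :: "complex^'n^'n \<Rightarrow> bool" where
  "psd A \<longleftrightarrow> hermitian A \<and>
     (\<forall>x::complex^'n. 0 \<le> Re (\<Sum>i\<in>UNIV. \<Sum>j\<in>UNIV. cnj (x$i) * A$i$j * x$j))"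

definition density :: "complex^'n^'n \<Rightarrow> bool" where
  "density \<rho> \<longleftrightarrow> psd \<rho> \<and> trace \<rho> = 1"

definition clinear_map :: "(complex^'n^'n \<Rightarrow> complex^'n^'n) \<Rightarrow> bool" where
  "clinear_map \<phi> \<longleftrightarrow> (\<forall>X Y. \<phi> (X + Y) = \<phi> X + \<phi> Y) \<and> (\<forall>c X. \<phi> (mscale c X) = mscale c (\<phi> X))"

definition munit :: "'n \<Rightarrow> 'n \<Rightarrow> complex^'n^'n" where
  "munit i j = (\<chi> k l. if k = i \<and> l = j then 1 else 0)"

definition choi :: "(complex^'n^'n \<Rightarrow> complex^'n^'n) \<Rightarrow> complex^('n \<times> 'n)^('n \<times> 'n)" where
  "choi \<phi> = (\<chi> p q. \<phi> (munit (fst p) (fst q)) $ snd p $ snd q)"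

definition completely_positive :: "(complex^'n^'n \<Rightarrow> complex^'n^'n) \<Rightarrow> bool" where
  "completely_positive \<phi> \<longleftrightarrow> psd (choi \<phi>)"

definition quantum_channel :: "(complex^'n^'n \<Rightarrow> complex^'n^'n) \<Rightarrow> bool" where
  "quantum_channel \<phi> \<longleftrightarrow> clinear_map \<phi> \<and> completely_positive \<phi> \<and> (\<forall>X. trace (\<phi> X) = trace X)"

text \<open>Entanglement-breaking channel, via the measure-and-prepare (Holevo) form
  phi(X) = sum_i rho_i Tr[E_i X] with density matrices rho_i and a POVM (E_i).\<close>
definition entanglement_breaking :: "(complex^'n^'n \<Rightarrow> complex^'n^'n) \<Rightarrow> bool" where
  "entanglement_breaking \<phi> \<longleftrightarrow> quantum_channel \<phi> \<and>
     (\<exists>(I::nat set) \<rho> E. finite I \<and> (\<forall>i\<in>I. density (\<rho> i) \<and> psd (E i)) \<and>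
        (\<Sum>i\<in>I. E i) = mat 1 \<and>
        (\<forall>X. \<phi> X = (\<Sum>i\<in>I. mscale (trace (E i ** X)) (\<rho> i))))"

end

theory Submission
  imports Defs "HOL-Library.Complex_Order"
begin

text \<open>
  Write \<open>\<phi> X = (\<Sum>i. tr (E\<^sub>i X) \<rho>\<^sub>i)\<close> and \<open>H = \<phi> A\<close>, and let \<open>V\<close> be the space of matrices \<open>X\<close>
  with \<open>u\<^sup>* X w = 0\<close> for all \<open>u, w \<in> ker A\<close>; its codimension is at most \<open>(d - r)\<^sup>2\<close>.
  A positive semidefinite \<open>E\<^sub>i\<close> with \<open>tr (E\<^sub>i A) = 0\<close> is a sum of matrices \<open>v v\<^sup>*\<close> with
  \<open>A v = 0\<close>, so \<open>tr (E\<^sub>i X) = 0\<close> on \<open>V\<close>; a state \<open>\<rho>\<^sub>i\<close> with \<open>tr (E\<^sub>i A) \<noteq> 0\<close> occurs in \<open>H\<close>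
  with positive weight and is therefore supported on the range of \<open>H\<close>. Hence \<open>\<phi>\<close> maps \<open>V\<close>
  into the matrices supported on the range of \<open>H\<close>, a space of dimension \<open>s\<^sup>2\<close>, and
  rank--nullity for \<open>\<phi>\<close> on \<open>V\<close> gives \<open>dim (ker \<phi>) \<ge> d\<^sup>2 - (d - r)\<^sup>2 - s\<^sup>2 = 2 d r - r\<^sup>2 - s\<^sup>2\<close>.
\<close>

section \<open>Sesquilinear forms and positive semidefinite matrices\<close>

definition sesq :: "complex^'m \<Rightarrow> complex^'n^'m \<Rightarrow> complex^'n \<Rightarrow> complex" where
  "sesq u X w = (\<Sum>i\<in>UNIV. \<Sum>j\<in>UNIV. cnj (u$i) * X$i$j * w$j)"

lemma sesq_add_left: "sesq (u + u') X w = sesq u X w + sesq u' X w"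
  by (simp add: sesq_def algebra_simps sum.distrib)

lemma sesq_add_right: "sesq u X (w + w') = sesq u X w + sesq u X w'"
  by (simp add: sesq_def algebra_simps sum.distrib)

lemma sesq_add_matrix: "sesq u (X + Y) w = sesq u X w + sesq u Y w"
  by (simp add: sesq_def algebra_simps sum.distrib)

lemma sesq_scale_left: "sesq (c *s u) X w = cnj c * sesq u X w"
  by (simp add: sesq_def algebra_simps sum_distrib_left)

lemma sesq_scale_right: "sesq u X (c *s w) = c * sesq u X w"
  by (simp add: sesq_def algebra_simps sum_distrib_left)

lemma sesq_mscale: "sesq u (mscale c X) w = c * sesq u X w"
  by (simp add: sesq_def mscale_def algebra_simps sum_distrib_left)

lemma sesq_zero [simp]: "sesq 0 X w = 0" "sesq u X 0 = 0" "sesq u 0 w = 0"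
  by (simp_all add: sesq_def)

lemma sesq_sum_matrix: "sesq u (sum f I) w = (\<Sum>i\<in>I. sesq u (f i) w)"
  by (induction I rule: infinite_finite_induct) (simp_all add: sesq_add_matrix)

lemma sesq_matrix_vector: "sesq u X w = (\<Sum>i\<in>UNIV. cnj (u$i) * (X *v w)$i)"
  by (simp add: sesq_def matrix_vector_mult_def sum_distrib_left mult.assoc)

lemma sesq_axis_left: "sesq (axis i 1) X w = (X *v w)$i"
proof -
  have "cnj (axis i 1 $ k) * (X *v w)$k = (if k = i then (X *v w)$k else 0)" for k
    by (simp add: axis_def)
  then show ?thesis
    by (simp add: sesq_matrix_vector)
qed

lemma sesq_axis_axis: "sesq (axis i 1) X (axis j 1) = X$i$j"
proof -
  have "X$i$k * axis j 1 $ k = (if k = j then X$i$j else 0)" for k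
    by (simp add: axis_def)
  then show ?thesis
    by (simp add: sesq_axis_left matrix_vector_mult_def)
qed

lemma sesq_eq_0_imp_eq_0: "(\<And>u w. sesq u X w = 0) \<Longrightarrow> X = 0"
  by (metis sesq_axis_axis vec_eq_iff zero_index)

lemma hermitian_cnj: "hermitian M \<Longrightarrow> cnj (M$i$j) = M$j$i"
  unfolding hermitian_def by (metis complex_cnj_cnj)

lemma sesq_hermitian:
  assumes "hermitian M"
  shows "sesq x M y = cnj (sesq y M x)"
proof -
  have "cnj (sesq y M x) = (\<Sum>i\<in>UNIV. \<Sum>j\<in>UNIV. cnj (x$j) * M$j$i * y$i)"
    by (simp add: sesq_def hermitian_cnj[OF assms] mult_ac)
  also have "\<dots> = sesq x M y"
    unfolding sesq_def by (rule sum.swap)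
  finally show ?thesis by simp
qed

lemma psd_iff_sesq_nonneg: "psd M \<longleftrightarrow> hermitian M \<and> (\<forall>x. 0 \<le> sesq x M x)"
proof -
  have "Im (sesq x M x) = 0" if "hermitian M" for x
    using sesq_hermitian[OF that, of x x] by (simp add: complex_eq_iff)
  then show ?thesis
    by (auto simp: psd_def sesq_def[symmetric] less_eq_complex_def)
qed

lemma psd_hermitian: "psd M \<Longrightarrow> hermitian M"
  by (simp add: psd_def)

lemma psd_sesq_nonneg: "psd M \<Longrightarrow> 0 \<le> sesq x M x"
  by (simp add: psd_iff_sesq_nonneg)

lemma psd_nonneg_combination:
  assumes "\<And>i. i \<in> I \<Longrightarrow> 0 \<le> c i \<and> psd (M i)"
  shows "psd (\<Sum>i\<in>I. mscale (c i) (M i))"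
  unfolding psd_iff_sesq_nonneg
proof (intro conjI allI)
  have "cnj (c i * M i $ b $ a) = c i * M i $ a $ b" if "i \<in> I" for i a b
    using assms[OF that] hermitian_cnj[OF psd_hermitian, of "M i"]
    by (simp add: less_eq_complex_def complex_eq_iff)
  then show "hermitian (\<Sum>i\<in>I. mscale (c i) (M i))"
    by (simp add: hermitian_def sum_component cnj_sum mscale_def)
  show "0 \<le> sesq x (\<Sum>i\<in>I. mscale (c i) (M i)) x" for x
    using assms by (auto simp: sesq_sum_matrix sesq_mscale psd_sesq_nonneg intro!: sum_nonneg)
qed

lemma nonneg_quadratic_coeff_bound:
  fixes a c q :: real
  assumes nonneg: "\<And>k. 0 \<le> k \<Longrightarrow> 0 \<le> a - 2 * k * c + k^2 * c * q"
    and "0 \<le> a" "0 \<le> c" "0 \<le> q"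
  shows "c \<le> a * q"
proof (cases "q > 0")
  case True
  have "0 \<le> a - 2 * (1/q) * c + (1/q)^2 * c * q"
    using nonneg[of "1/q"] True by simp
  then show ?thesis
    using True by (simp add: power2_eq_square field_simps)
next
  case False
  have "c \<le> 0"
  proof (rule ccontr)
    assume "\<not> c \<le> 0"
    define k where "k = (a + 1) / (2 * c)"
    have "0 \<le> k"
      using \<open>0 \<le> a\<close> \<open>\<not> c \<le> 0\<close> by (simp add: k_def)
    then have "0 \<le> a - 2 * k * c + k^2 * c * q"
      by (rule nonneg)
    moreover have "k^2 * c * q \<le> 0"
      using False \<open>\<not> c \<le> 0\<close> by (simp add: mult_nonneg_nonpos)
    moreover have "2 * k * c = a + 1"
      using \<open>\<not> c \<le> 0\<close> by (simp add: k_def)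
    ultimately show False by linarith
  qed
  then show ?thesis
    using False \<open>0 \<le> c\<close> \<open>0 \<le> q\<close> by simp
qed

lemma psd_cauchy_schwarz:
  assumes "psd M"
  shows "(cmod (sesq y M x))^2 \<le> Re (sesq y M y) * Re (sesq x M x)"
proof -
  define b where "b = sesq y M x"
  have "0 \<le> Re (sesq x M x) - 2 * k * (cmod b)^2 + k^2 * (cmod b)^2 * Re (sesq y M y)" for k
  proof -
    have "sesq x M y = cnj b"
      unfolding b_def using sesq_hermitian[OF psd_hermitian[OF assms]] .
    then have expand: "sesq (x + t *s y) M (x + t *s y)
        = sesq x M x + t * cnj b + cnj t * b + cnj t * t * sesq y M y" for t
      unfolding sesq_add_left sesq_add_right sesq_scale_left sesq_scale_right b_def[symmetric]
      by (simp add: algebra_simps)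
    have cmod_b: "of_real (cmod b) * of_real (cmod b) = b * cnj b"
      by (metis complex_norm_square of_real_power power2_eq_square)
    have "sesq (x + (- of_real k * b) *s y) M (x + (- of_real k * b) *s y)
        = sesq x M x - of_real (2 * k * (cmod b)^2) + of_real (k^2 * (cmod b)^2) * sesq y M y"
      unfolding expand by (simp add: algebra_simps power2_eq_square cmod_b)
    moreover have "0 \<le> Re (sesq (x + (- of_real k * b) *s y) M (x + (- of_real k * b) *s y))"
      using psd_sesq_nonneg[OF assms] by (simp add: less_eq_complex_def)
    ultimately show ?thesis
      by simp
  qed
  then have "(cmod b)^2 \<le> Re (sesq x M x) * Re (sesq y M y)"
    using psd_sesq_nonneg[OF assms, of x] psd_sesq_nonneg[OF assms, of y]
    by (intro nonneg_quadratic_coeff_bound) (simp_all add: less_eq_complex_def)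
  then show ?thesis
    by (simp add: b_def mult.commute)
qed

lemma psd_sesq_self_eq_0_imp_kernel:
  assumes "psd M" "sesq x M x = 0"
  shows "M *v x = 0"
proof -
  have "(cmod (sesq (axis i 1) M x))^2 \<le> 0" for i
    using psd_cauchy_schwarz[OF assms(1), of "axis i 1" x] assms(2) by simp
  then show ?thesis
    by (simp add: vec_eq_iff sesq_axis_left)
qed

lemma psd_diag_nonneg: "psd M \<Longrightarrow> 0 \<le> M$j$j"
  using psd_sesq_nonneg[of M "axis j 1"] by (simp add: sesq_axis_axis)

lemma psd_diag_eq_0_imp_column_eq_0:
  assumes "psd M" "M$j$j = 0"
  shows "M$i$j = 0"
  using psd_sesq_self_eq_0_imp_kernel[OF assms(1), of "axis j 1"] assms(2)
  by (metis sesq_axis_axis sesq_axis_left zero_index)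

section \<open>Rank-one decomposition of positive semidefinite matrices\<close>

definition outer :: "complex^'n \<Rightarrow> complex^'n^'n" where
  "outer v = (\<chi> i k. v$i * cnj (v$k))"

lemma trace_outer_mult: "trace (outer v ** X) = sesq v X v"
proof -
  have "trace (outer v ** X) = (\<Sum>i\<in>UNIV. \<Sum>k\<in>UNIV. cnj (v$k) * X$k$i * v$i)"
    by (simp add: trace_def outer_def matrix_matrix_mult_def sum_distrib_left mult_ac)
  also have "\<dots> = sesq v X v"
    unfolding sesq_def by (rule sum.swap)
  finally show ?thesis .
qed

text \<open>Eliminating row and column \<open>j\<close>: one step of a Cholesky factorisation.\<close>

definition schur_complement :: "complex^'n^'n \<Rightarrow> 'n \<Rightarrow> complex^'n^'n" where
  "schur_complement M j = (\<chi> i k. M$i$k - M$i$j * M$j$k / M$j$j)"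

lemma psd_eq_schur_complement_add_outer:
  assumes "psd M"
  shows "M = schur_complement M j + outer (\<chi> i. M$i$j / of_real (sqrt (Re (M$j$j))))"
proof -
  have jj: "M$j$j = of_real (Re (M$j$j))" "0 \<le> Re (M$j$j)"
    using psd_diag_nonneg[OF assms, of j] by (simp_all add: less_eq_complex_def complex_eq_iff)
  have "M$a$j * cnj (M$b$j) / (of_real (sqrt (Re (M$j$j))) * of_real (sqrt (Re (M$j$j))))
      = M$a$j * M$j$b / M$j$j" for a b
    using jj by (simp add: hermitian_cnj[OF psd_hermitian[OF assms]] flip: of_real_mult)
  then show ?thesis
    by (simp add: vec_eq_iff schur_complement_def outer_def)
qed

lemma sesq_schur_complement:
  assumes "hermitian M"
  shows "sesq x (schur_complement M j) x
    = sesq x M x - cnj (sesq (axis j 1) M x) * sesq (axis j 1) M x / M$j$j"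
proof -
  have "(\<Sum>c\<in>UNIV. M$j$c * x$c) = sesq (axis j 1) M x"
    by (simp add: sesq_axis_left matrix_vector_mult_def)
  moreover have "(\<Sum>a\<in>UNIV. cnj (x$a) * M$a$j) = cnj (sesq (axis j 1) M x)"
    by (simp add: sesq_axis_left matrix_vector_mult_def cnj_sum hermitian_cnj[OF assms] mult.commute)
  moreover have "sesq x (schur_complement M j) x
      = sesq x M x - (\<Sum>a\<in>UNIV. \<Sum>c\<in>UNIV. cnj (x$a) * (M$a$j * M$j$c / M$j$j) * x$c)"
    by (simp add: sesq_def schur_complement_def algebra_simps sum_subtractf)
  moreover have "(\<Sum>a\<in>UNIV. \<Sum>c\<in>UNIV. cnj (x$a) * (M$a$j * M$j$c / M$j$j) * x$c)
      = (\<Sum>a\<in>UNIV. cnj (x$a) * M$a$j) * (\<Sum>c\<in>UNIV. M$j$c * x$c) / M$j$j"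
    by (simp add: sum_distrib_left sum_distrib_right sum_divide_distrib algebra_simps)
  ultimately show ?thesis
    by simp
qed

lemma psd_schur_complement:
  fixes M :: "complex^'n^'n"
  assumes psd: "psd M" and jj: "M$j$j \<noteq> 0"
  shows "psd (schur_complement M j)"
  unfolding psd_iff_sesq_nonneg
proof (intro conjI allI)
  have herm: "hermitian M"
    using psd by (rule psd_hermitian)
  then show herm': "hermitian (schur_complement M j)"
    by (simp add: hermitian_def schur_complement_def hermitian_cnj[OF herm] mult.commute)
  fix x :: "complex^'n"
  define m where "m = Re (M$j$j)"
  define b where "b = sesq (axis j 1) M x"
  have "M$j$j = of_real m" "0 \<le> m"
    using psd_diag_nonneg[OF psd, of j] by (simp_all add: m_def less_eq_complex_def complex_eq_iff)
  then have m_pos: "0 < m" and jj_real: "M$j$j = of_real m"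
    using jj by fastforce+
  have "Re (sesq x (schur_complement M j) x) = Re (sesq x M x) - (cmod b)^2 / m"
    using sesq_schur_complement[OF herm, of x j] jj_real
    by (simp add: b_def power2_eq_square) (metis cmod_power2 power2_eq_square)
  moreover have "(cmod b)^2 \<le> m * Re (sesq x M x)"
    using psd_cauchy_schwarz[OF psd, of "axis j 1" x] by (simp add: b_def sesq_axis_axis m_def)
  moreover have "Im (sesq x (schur_complement M j) x) = 0"
    using sesq_hermitian[OF herm', of x x] by (simp add: complex_eq_iff)
  ultimately show "0 \<le> sesq x (schur_complement M j) x"
    using m_pos by (simp add: less_eq_complex_def divide_le_eq mult.commute)
qed

lemma schur_complement_nonzero_columns:
  assumes "M$j$j \<noteq> 0"
  shows "{k. \<exists>i. schur_complement M j $i$k \<noteq> 0} \<subseteq> {k. \<exists>i. M$i$k \<noteq> 0} - {j}"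
proof -
  have "schur_complement M j $i$k = 0" if "k = j \<or> (\<forall>i'. M$i'$k = 0)" for i k
    using that assms by (auto simp: schur_complement_def)
  then show ?thesis
    by blast
qed

lemma psd_eq_sum_outer: "psd (M :: complex^'n^'n) \<Longrightarrow> \<exists>vs. M = sum_list (map outer vs)"
proof (induction "card {k. \<exists>i. M$i$k \<noteq> 0}" arbitrary: M rule: less_induct)
  case less
  show ?case
  proof (cases "M = 0")
    case True
    then show ?thesis
      by (intro exI[of _ "[]"]) simp
  next
    case False
    then obtain i j where ij: "M$i$j \<noteq> 0"
      by (auto simp: vec_eq_iff)
    then have jj: "M$j$j \<noteq> 0"
      using psd_diag_eq_0_imp_column_eq_0[OF less.prems] by blast
    let ?M' = "schur_complement M j"
    have "card {k. \<exists>i. ?M'$i$k \<noteq> 0} \<le> card ({k. \<exists>i. M$i$k \<noteq> 0} - {j})"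
      using schur_complement_nonzero_columns[OF jj] by (simp add: card_mono)
    also have "\<dots> < card {k. \<exists>i. M$i$k \<noteq> 0}"
      using ij by (intro card_Diff1_less) auto
    finally obtain vs where "?M' = sum_list (map outer vs)"
      using less.hyps psd_schur_complement[OF less.prems jj] by blast
    moreover note psd_eq_schur_complement_add_outer[OF less.prems, of j]
    ultimately have "M = sum_list (map outer ((\<chi> i. M$i$j / of_real (sqrt (Re (M$j$j)))) # vs))"
      by (simp add: add.commute)
    then show ?thesis
      by blast
  qed
qed

lemma trace_add_mult:
  "trace ((B + C) ** X) = trace (B ** X) + trace (C ** (X :: 'a::comm_semiring_1^'n^'n))"
  by (simp add: trace_def matrix_matrix_mult_def algebra_simps sum.distrib)

lemma trace_sum_outer_mult: "trace (sum_list (map outer vs) ** X) = (\<Sum>v\<leftarrow>vs. sesq v X v)"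
  by (induction vs) (simp add: trace_def, simp add: trace_add_mult trace_outer_mult)

lemma psd_trace_mult_nonneg:
  assumes "psd E" "psd A"
  shows "0 \<le> trace (E ** A)"
proof -
  obtain vs where "E = sum_list (map outer vs)"
    using psd_eq_sum_outer[OF assms(1)] by blast
  then show ?thesis
    using psd_sesq_nonneg[OF assms(2)] by (auto simp: trace_sum_outer_mult intro!: sum_list_nonneg)
qed

section \<open>Rank--nullity\<close>

context finite_dimensional_vector_space
begin

lemma span_Int_span_Diff:
  assumes "independent C" "B \<subseteq> C"
  shows "span B \<inter> span (C - B) \<subseteq> {0}"
proof -
  have fin: "finite C" "finite B"
    using assms finiteI_independent finite_subset by blast+
  have "dim {x + y |x y. x \<in> span B \<and> y \<in> span (C - B)} + dim (span B \<inter> span (C - B))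
      = dim (span B) + dim (span (C - B))"
    by (rule dim_sums_Int) simp_all
  moreover have "{x + y |x y. x \<in> span B \<and> y \<in> span (C - B)} = span C"
    using assms(2) by (simp add: span_Un[symmetric] Un_absorb1)
  moreover have "card C = card B + card (C - B)"
    using fin assms(2) by (simp add: card_Diff_subset le_add_diff_inverse card_mono)
  ultimately have "dim (span B \<inter> span (C - B)) = 0"
    using assms independent_mono[OF assms(1)] by (simp add: dim_eq_card_independent)
  then show ?thesis
    by simp
qed

end

context finite_dimensional_vector_space_pair
begin

lemma rank_nullity_le:
  assumes lf: "Vector_Spaces.linear s1 s2 f" and S: "vs1.subspace S"
  shows "vs1.dim S \<le> vs1.dim (S \<inter> {x. f x = 0}) + vs2.dim (f ` S)"
proof -
  obtain B where B: "B \<subseteq> S \<inter> {x. f x = 0}" "vs1.independent B"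
      "S \<inter> {x. f x = 0} \<subseteq> vs1.span B" "card B = vs1.dim (S \<inter> {x. f x = 0})"
    using vs1.basis_exists by blast
  obtain C where C: "B \<subseteq> C" "C \<subseteq> S" "vs1.independent C" "S \<subseteq> vs1.span C"
    using vs1.maximal_independent_subset_extend[of B S] B by blast
  have "card C = card B + card (C - B)"
    using C(1,3) vs1.finiteI_independent finite_subset
    by (metis card_Diff_subset card_mono le_add_diff_inverse)
  moreover have "vs1.span (C - B) \<subseteq> S"
    using C(2) S by (intro vs1.span_minimal) auto
  then have "inj_on f (vs1.span (C - B))"
    using vs1.span_Int_span_Diff[OF C(3,1)] B(3) lf vs1.span_zero
    by (auto simp: linear_iff_module_hom module_hom.inj_on_iff_eq_0[OF _ vs1.subspace_span])
  then have "card (C - B) = vs2.dim (f ` (C - B))"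
    using lf vs1.independent_mono[OF C(3)] by (simp add: dim_image_eq vs1.dim_eq_card_independent)
  moreover have "\<dots> \<le> vs2.dim (f ` S)"
    using C(2) by (intro vs2.dim_subset) auto
  ultimately show ?thesis
    using C vs1.basis_card_eq_dim[of C S] B(4) by linarith
qed

end

context finite_dimensional_vector_space
begin

lemma dim_le_dim_Int_kernels_add_card:
  assumes "finite P" "subspace S"
    and "\<And>p. p \<in> P \<Longrightarrow> Vector_Spaces.linear scale ((*) :: 'a \<Rightarrow> 'a \<Rightarrow> 'a) (g p)"
  shows "dim S \<le> dim (S \<inter> {x. \<forall>p\<in>P. g p x = 0}) + card P"
  using assms(1,3)
proof (induction P rule: finite_induct)
  case empty
  then show ?case by simp
next
  case (insert p P)
  interpret pair: finite_dimensional_vector_space_pair scale Basis "(*) :: 'a \<Rightarrow> 'a \<Rightarrow> 'a" "{1}" ..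
  define S' where "S' = S \<inter> {x. \<forall>q\<in>P. g q x = 0}"
  have hom: "module_hom scale (*) (g q)" if "q \<in> P" for q
    using insert.prems that by (simp add: linear_iff_module_hom)
  have "subspace {x. \<forall>q\<in>P. g q x = 0}"
    unfolding subspace_def
    using module_hom.zero[OF hom] module_hom.add[OF hom] module_hom.scale[OF hom] by auto
  then have "subspace S'"
    unfolding S'_def by (rule subspace_inter[OF assms(2)])
  then have "dim S' \<le> dim (S' \<inter> {x. g p x = 0}) + vector_space_over_itself.dim (g p ` S')"
    by (intro pair.rank_nullity_le insert.prems) simp
  also have "vector_space_over_itself.dim (g p ` S') \<le> 1"
    using vector_space_over_itself.dim_subset_UNIV[of "g p ` S'"]
    by (simp add: vector_space_over_itself.dimension_def)
  also have "S' \<inter> {x. g p x = 0} = S \<inter> {x. \<forall>q\<in>insert p P. g q x = 0}"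
    unfolding S'_def by auto
  finally show ?case
    using insert.IH insert.prems insert.hyps by (simp add: S'_def)
qed

end

section \<open>The vector space of complex matrices\<close>

interpretation cmat: vector_space "mscale :: complex \<Rightarrow> complex^'n^'m \<Rightarrow> complex^'n^'m"
  by unfold_locales (simp_all add: mscale_def vec_eq_iff algebra_simps)

lemma mscale_nth [simp]: "mscale c X $ i $ j = c * X$i$j"
  by (simp add: mscale_def)

lemma munit_nth: "munit i j $ a $ b = (if a = i \<and> b = j then 1 else 0)"
  by (simp add: munit_def)

lemma munit_eq_iff: "munit i j = munit k l \<longleftrightarrow> i = k \<and> j = l"
  by (metis munit_nth zero_neq_one)

definition matrix_units :: "(complex^'n^'n) set" where
  "matrix_units = range (case_prod munit)"

lemma matrix_units_nth: "v \<in> matrix_units \<Longrightarrow> v $ a $ b = (if v = munit a b then 1 else 0)"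
  by (auto simp: matrix_units_def munit_nth munit_eq_iff)

lemma matrix_eq_sum_munit: "X = (\<Sum>(i,j)\<in>UNIV. mscale (X$i$j) (munit i j))"
proof -
  have "X$fst p$snd p * (if a = fst p \<and> b = snd p then 1 else 0) = (if p = (a,b) then X$a$b else 0)"
    for a b p
    by (cases p) auto
  then have "(\<Sum>(i,j)\<in>UNIV. mscale (X$i$j) (munit i j)) $ a $ b = X$a$b" for a b
    by (simp add: sum_component case_prod_unfold munit_nth)
  then show ?thesis
    by (simp add: vec_eq_iff)
qed

interpretation cmat: finite_dimensional_vector_space
  "mscale :: complex \<Rightarrow> complex^'n^'n \<Rightarrow> complex^'n^'n" matrix_units
proof unfold_locales
  show "finite (matrix_units :: (complex^'n^'n) set)"
    by (simp add: matrix_units_def)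
  show "\<not> cmat.dependent (matrix_units :: (complex^'n^'n) set)"
  proof
    assume "cmat.dependent (matrix_units :: (complex^'n^'n) set)"
    then obtain u v where uv: "(\<Sum>w\<in>matrix_units. mscale (u w) w) = (0::complex^'n^'n)"
      "v \<in> matrix_units" "u v \<noteq> 0"
      using cmat.dependent_finite[of matrix_units] by (auto simp: matrix_units_def)
    then obtain a b where v: "v = munit a b"
      by (auto simp: matrix_units_def)
    have "(\<Sum>w\<in>matrix_units. mscale (u w) w) $ a $ b
        = (\<Sum>w\<in>(matrix_units :: (complex^'n^'n) set). if w = munit a b then u w else 0)"
      by (simp add: sum_component) (rule sum.cong, auto simp: matrix_units_nth)
    also have "\<dots> = u v"
      using uv(2) v by (simp add: matrix_units_def)
    finally show False
      using uv by simp
  qed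
  show "cmat.span (matrix_units :: (complex^'n^'n) set) = UNIV"
  proof (intro set_eqI iffI)
    fix X :: "complex^'n^'n"
    have "(\<Sum>(i,j)\<in>UNIV. mscale (X$i$j) (munit i j)) \<in> cmat.span matrix_units"
      unfolding case_prod_unfold
      by (intro cmat.span_sum cmat.span_scale cmat.span_base) (auto simp: matrix_units_def)
    then show "X \<in> cmat.span matrix_units"
      by (subst matrix_eq_sum_munit)
  qed simp
qed

lemma card_matrix_units: "card (matrix_units :: (complex^'n^'n) set) = CARD('n)^2"
proof -
  have "inj (case_prod munit :: 'n \<times> 'n \<Rightarrow> complex^'n^'n)"
    by (auto simp: inj_on_def munit_eq_iff)
  then show ?thesis
    by (simp add: matrix_units_def card_image card_cartesian_product power2_eq_square)
qed

lemma cmat_dim_UNIV: "cmat.dim (UNIV :: (complex^'n^'n) set) = CARD('n)^2"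
  by (simp add: card_matrix_units)

lemma cmat_dim_le: "cmat.dim (S :: (complex^'n^'n) set) \<le> CARD('n)^2"
  using cmat.dim_subset[of S UNIV] by (simp add: card_matrix_units)

interpretation cmat: finite_dimensional_vector_space_pair
  "mscale :: complex \<Rightarrow> complex^'n^'n \<Rightarrow> complex^'n^'n" matrix_units
  "mscale :: complex \<Rightarrow> complex^'n^'n \<Rightarrow> complex^'n^'n" matrix_units ..

section \<open>Kernel and range of a Hermitian matrix\<close>

text \<open>
  The library identifies row rank and column rank only over the reals; for a Hermitian
  matrix the rows are the conjugates of the columns, which is all that is needed here.
\<close>

definition vcnj :: "complex^'n \<Rightarrow> complex^'n" where
  "vcnj x = (\<chi> i. cnj (x$i))"

lemma vcnj_vcnj [simp]: "vcnj (vcnj x) = x"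
  by (simp add: vcnj_def vec_eq_iff)

lemma vcnj_add [simp]: "vcnj (x + y) = vcnj x + vcnj y"
  by (simp add: vcnj_def vec_eq_iff)

lemma vcnj_scale [simp]: "vcnj (c *s x) = cnj c *s vcnj x"
  by (simp add: vcnj_def vec_eq_iff)

lemma vcnj_zero [simp]: "vcnj 0 = 0"
  by (simp add: vcnj_def vec_eq_iff)

lemma vcnj_in_span: "x \<in> vec.span S \<Longrightarrow> vcnj x \<in> vec.span (vcnj ` S)"
proof -
  assume x: "x \<in> vec.span S"
  have "vec.subspace {x. vcnj x \<in> vec.span (vcnj ` S)}"
    unfolding vec.subspace_def by (auto intro: vec.span_add vec.span_scale vec.span_zero)
  moreover have "S \<subseteq> {x. vcnj x \<in> vec.span (vcnj ` S)}"
    by (auto intro: vec.span_base)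
  ultimately show ?thesis
    using x vec.span_minimal by blast
qed

lemma dim_vcnj_image_le: "vec.dim (vcnj ` S) \<le> vec.dim (S :: (complex^'n) set)"
proof -
  obtain B where B: "vec.independent B" "S \<subseteq> vec.span B" "card B = vec.dim S"
    using vec.basis_exists by blast
  then have "finite B"
    using vec.finiteI_independent by blast
  have "vcnj ` S \<subseteq> vec.span (vcnj ` B)"
    using B(2) vcnj_in_span by blast
  then have "vec.dim (vcnj ` S) \<le> card (vcnj ` B)"
    using \<open>finite B\<close> by (intro vec.dim_le_card) simp_all
  also have "\<dots> \<le> card B"
    using \<open>finite B\<close> by (rule card_image_le)
  finally show ?thesis
    using B(3) by simp
qed

lemma dim_vcnj_image: "vec.dim (vcnj ` S) = vec.dim (S :: (complex^'n) set)"
  using dim_vcnj_image_le[of S] dim_vcnj_image_le[of "vcnj ` S"] by (simp add: image_image)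

lemma matrix_vector_mult_axis: "M *v axis k 1 = column k (M :: complex^'n^'m)"
  using sesq_axis_left[of _ M "axis k 1"] by (simp add: vec_eq_iff column_def sesq_axis_axis)

lemma range_matrix_vector_mult: "range ((*v) M) = vec.span (columns (M :: complex^'n^'m))"
proof -
  have "columns M = (*v) M ` cart_basis"
    unfolding columns_def cart_basis_def Setcompr_eq_image
    by (simp add: image_image matrix_vector_mult_axis)
  then show ?thesis
    by (simp add: vec.span_image)
qed

lemma rank_hermitian: "hermitian M \<Longrightarrow> rank M = vec.dim (range ((*v) M))"
proof -
  assume "hermitian M"
  then have "column k M = vcnj (row k M)" for k
    by (simp add: column_def row_def vcnj_def vec_eq_iff hermitian_cnj)
  then have "columns M = vcnj ` rows M"
    unfolding columns_def rows_def Setcompr_eq_image by (simp add: image_image)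
  then show ?thesis
    by (simp add: range_matrix_vector_mult row_rank_def_gen dim_vcnj_image)
qed

lemma hermitian_kernel_Int_range:
  assumes "hermitian M" "M *v x = 0" "x \<in> range ((*v) M)"
  shows "x = 0"
proof -
  obtain y where y: "x = M *v y"
    using assms(3) by blast
  have "(\<Sum>i\<in>UNIV. cnj (x$i) * x$i) = sesq x M y"
    by (simp add: sesq_matrix_vector y)
  also have "\<dots> = 0"
    using sesq_hermitian[OF assms(1), of x y] assms(2) by (simp add: sesq_matrix_vector)
  finally have "\<forall>i\<in>UNIV. cnj (x$i) * x$i = 0"
    by (subst (asm) sum_nonneg_eq_0_iff) (auto simp: less_eq_complex_def)
  then show ?thesis
    by (simp add: vec_eq_iff)
qed

lemma hermitian_kernel_range_complement:
  fixes M :: "complex^'n^'n"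
  assumes "hermitian M"
  shows "vec.dim {x. M *v x = 0} + rank M = CARD('n)"
    and "\<exists>n y. z = n + M *v y \<and> M *v n = 0"
proof -
  let ?N = "{x. M *v x = 0}" and ?R = "range ((*v) M)"
  let ?NR = "{x + y |x y. x \<in> ?N \<and> y \<in> ?R}"
  have subN: "vec.subspace ?N"
    unfolding vec.subspace_def by (auto simp: matrix_vector_right_distrib vec.scale)
  have subR: "vec.subspace ?R"
    by (simp add: range_matrix_vector_mult)
  have "CARD('n) \<le> vec.dim ?N + vec.dim ?R"
    using vec.rank_nullity_le[OF vec.linear_axioms vec.subspace_UNIV, of M]
    by (simp add: vec_dim_card card_cart_basis)
  moreover have "vec.dim ?NR + vec.dim (?N \<inter> ?R) = vec.dim ?N + vec.dim ?R"
    by (rule vec.dim_sums_Int[OF subN subR])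
  moreover have "?N \<inter> ?R = {0}"
    using hermitian_kernel_Int_range[OF assms] by (auto intro: range_eqI[of _ _ 0])
  moreover have "vec.dim ?NR \<le> CARD('n)"
    by (rule dim_subset_UNIV_cart_gen)
  ultimately have dims: "vec.dim ?N + vec.dim ?R = CARD('n)"
    by simp
  then show "vec.dim ?N + rank M = CARD('n)"
    using rank_hermitian[OF assms] by simp
  have "?NR = UNIV"
    using dims \<open>?N \<inter> ?R = {0}\<close> \<open>vec.dim ?NR + _ = _\<close>
    by (intro vec.subspace_dim_equal vec.subspace_sums[OF subN subR])
      (simp_all add: vec_dim_card card_cart_basis)
  then show "\<exists>n y. z = n + M *v y \<and> M *v n = 0"
    by blast
qed

section \<open>Annihilators and the kernel bound\<close>

definition sesq_annihilator :: "(complex^'n) set \<Rightarrow> (complex^'n) set \<Rightarrow> (complex^'n^'n) set" where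
  "sesq_annihilator S T = {X. \<forall>u\<in>S. \<forall>w\<in>T. sesq u X w = 0}"

lemma linear_sesq_matrix: "Vector_Spaces.linear mscale (*) (\<lambda>X. sesq u X w)"
  by (auto simp: linear_iff_module_hom module_hom_iff cmat.module_axioms
      vector_space_over_itself.module_axioms sesq_add_matrix sesq_mscale)

lemma subspace_sesq_annihilator: "cmat.subspace (sesq_annihilator S T)"
  unfolding cmat.subspace_def sesq_annihilator_def
  by (simp add: sesq_add_matrix sesq_mscale)

lemma sesq_annihilator_span:
  assumes X: "X \<in> sesq_annihilator S T" and u: "u \<in> vec.span S" and w: "w \<in> vec.span T"
  shows "sesq u X w = 0"
proof -
  have "vec.span T \<subseteq> {w. \<forall>u\<in>S. sesq u X w = 0}"
    using X unfolding sesq_annihilator_def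
    by (intro vec.span_minimal) (auto simp: vec.subspace_def sesq_add_right sesq_scale_right)
  then have "vec.span S \<subseteq> {u. sesq u X w = 0}"
    using w by (intro vec.span_minimal) (auto simp: vec.subspace_def sesq_add_left sesq_scale_left)
  then show ?thesis
    using u by blast
qed

lemma dim_sesq_annihilator:
  "CARD('n)^2 \<le> cmat.dim (sesq_annihilator S T) + vec.dim S * vec.dim (T :: (complex^'n) set)"
proof -
  obtain B where B: "B \<subseteq> S" "vec.independent B" "S \<subseteq> vec.span B" "card B = vec.dim S"
    using vec.basis_exists by blast
  obtain C where C: "C \<subseteq> T" "vec.independent C" "T \<subseteq> vec.span C" "card C = vec.dim T"
    using vec.basis_exists by blast
  have fin: "finite B" "finite C"
    using B(2) C(2) vec.finiteI_independent by blast+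
  have "sesq_annihilator S T = {X. \<forall>p\<in>B \<times> C. (\<lambda>(u, w) X. sesq u X w) p X = 0}"
    using B(1,3) C(1,3) sesq_annihilator_span[of _ B C]
    by (auto simp: sesq_annihilator_def subset_iff)
  moreover have "cmat.dim (UNIV :: (complex^'n^'n) set)
      \<le> cmat.dim (UNIV \<inter> {X. \<forall>p\<in>B \<times> C. (\<lambda>(u, w) X. sesq u X w) p X = 0}) + card (B \<times> C)"
    using fin by (intro cmat.dim_le_dim_Int_kernels_add_card) (auto simp: linear_sesq_matrix)
  ultimately show ?thesis
    using B(4) C(4) cmat_dim_UNIV[where 'n='n] by (simp add: card_cartesian_product)
qed

lemma sesq_annihilator_UNIV: "sesq_annihilator UNIV UNIV = {0}"
  by (auto simp: sesq_annihilator_def intro: sesq_eq_0_imp_eq_0)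

text \<open>The matrices \<open>Y = P Y P\<close>, with \<open>P\<close> the orthogonal projection onto the range of \<open>H\<close>.\<close>

definition range_supported :: "complex^'n^'n \<Rightarrow> (complex^'n^'n) set" where
  "range_supported H =
    sesq_annihilator {v. H *v v = 0} UNIV \<inter> sesq_annihilator UNIV {v. H *v v = 0}"

lemma subspace_range_supported: "cmat.subspace (range_supported H)"
  by (simp add: range_supported_def subspace_sesq_annihilator cmat.subspace_inter)

lemma dim_range_supported_le:
  fixes H :: "complex^'n^'n"
  assumes "hermitian H"
  shows "cmat.dim (range_supported H) \<le> rank H ^ 2"
proof -
  let ?U = "range_supported H" and ?Z = "sesq_annihilator (range ((*v) H)) (range ((*v) H))"
  have "sesq u X w = 0" if X: "X \<in> ?U" "X \<in> ?Z" for X u w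
  proof -
    obtain n y where "u = n + H *v y" "H *v n = 0"
      using hermitian_kernel_range_complement(2)[OF assms] by blast
    moreover obtain n' y' where "w = n' + H *v y'" "H *v n' = 0"
      using hermitian_kernel_range_complement(2)[OF assms] by blast
    ultimately show ?thesis
      using X by (simp add: sesq_add_left sesq_add_right range_supported_def sesq_annihilator_def)
  qed
  then have "?U \<inter> ?Z \<subseteq> sesq_annihilator UNIV UNIV"
    by (auto simp: sesq_annihilator_def)
  then have "cmat.dim (?U \<inter> ?Z) = 0"
    by (simp add: sesq_annihilator_UNIV)
  moreover have "cmat.dim {x + y |x y. x \<in> ?U \<and> y \<in> ?Z} + cmat.dim (?U \<inter> ?Z)
      = cmat.dim ?U + cmat.dim ?Z"
    by (intro cmat.dim_sums_Int) (simp_all add: subspace_range_supported subspace_sesq_annihilator)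
  moreover have "cmat.dim {x + y |x y. x \<in> ?U \<and> y \<in> ?Z} \<le> CARD('n)^2"
    by (rule cmat_dim_le)
  moreover have "CARD('n)^2 \<le> cmat.dim ?Z + rank H ^ 2"
    using dim_sesq_annihilator[of "range ((*v) H)" "range ((*v) H)"]
    by (simp add: rank_hermitian[OF assms] power2_eq_square)
  ultimately show ?thesis
    by linarith
qed

lemma psd_trace_mult_eq_0_on_annihilator:
  assumes "psd E" "psd A" "trace (E ** A) = 0"
    and X: "X \<in> sesq_annihilator {v. A *v v = 0} {v. A *v v = 0}"
  shows "trace (E ** X) = 0"
proof -
  obtain vs where vs: "E = sum_list (map outer vs)"
    using psd_eq_sum_outer[OF assms(1)] by blast
  have "\<forall>v\<in>set vs. sesq v A v = 0"
    using assms(3) psd_sesq_nonneg[OF assms(2)]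
      sum_list_nonneg_eq_0_iff[of "map (\<lambda>v. sesq v A v) vs"]
    by (auto simp: vs trace_sum_outer_mult) blast
  then have "\<forall>v\<in>set vs. A *v v = 0"
    using psd_sesq_self_eq_0_imp_kernel[OF assms(2)] by blast
  then have "(\<Sum>v\<leftarrow>vs. sesq v X v) = (\<Sum>v\<leftarrow>vs. 0)"
    using X by (intro arg_cong[where f = sum_list] map_cong) (auto simp: sesq_annihilator_def)
  then show ?thesis
    by (simp add: vs trace_sum_outer_mult)
qed

lemma psd_combination_summand_range_supported:
  assumes "finite I" "\<And>i. i \<in> I \<Longrightarrow> 0 \<le> c i \<and> psd (M i)" "j \<in> I" "c j \<noteq> 0"
  shows "M j \<in> range_supported (\<Sum>i\<in>I. mscale (c i) (M i))"
proof -
  have "M j *v v = 0" if v: "(\<Sum>i\<in>I. mscale (c i) (M i)) *v v = 0" for v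
  proof -
    have "(\<Sum>i\<in>I. c i * sesq v (M i) v) = sesq v (\<Sum>i\<in>I. mscale (c i) (M i)) v"
      by (simp add: sesq_sum_matrix sesq_mscale)
    also have "\<dots> = 0"
      using v by (simp add: sesq_matrix_vector)
    finally have "(\<Sum>i\<in>I. c i * sesq v (M i) v) = 0" .
    then have "c j * sesq v (M j) v = 0"
      using assms by (subst (asm) sum_nonneg_eq_0_iff) (auto intro: mult_nonneg_nonneg psd_sesq_nonneg)
    then have "sesq v (M j) v = 0"
      using assms(4) by simp
    then show ?thesis
      using psd_sesq_self_eq_0_imp_kernel assms(2)[OF assms(3)] by blast
  qed
  then show ?thesis
    using sesq_hermitian[OF psd_hermitian[OF conjunct2[OF assms(2)[OF assms(3)]]]]
    by (auto simp: range_supported_def sesq_annihilator_def sesq_matrix_vector)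
qed

lemma measure_prepare_image_range_supported:
  fixes A X :: "complex^'n^'n"
  assumes "finite I" "\<And>i. i \<in> I \<Longrightarrow> psd (\<rho> i) \<and> psd (E i)" "psd A"
    and X: "X \<in> sesq_annihilator {v. A *v v = 0} {v. A *v v = 0}"
  shows "(\<Sum>i\<in>I. mscale (trace (E i ** X)) (\<rho> i))
    \<in> range_supported (\<Sum>i\<in>I. mscale (trace (E i ** A)) (\<rho> i))"
proof (rule cmat.subspace_sum[OF subspace_range_supported])
  fix i
  assume i: "i \<in> I"
  show "mscale (trace (E i ** X)) (\<rho> i) \<in> range_supported (\<Sum>i\<in>I. mscale (trace (E i ** A)) (\<rho> i))"
  proof (cases "trace (E i ** A) = 0")
    case True
    have "trace (E i ** X) = 0"
      using psd_trace_mult_eq_0_on_annihilator[OF conjunct2[OF assms(2)[OF i]] assms(3) True X] .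
    then show ?thesis
      using cmat.subspace_0[OF subspace_range_supported] by simp
  next
    case False
    then have "\<rho> i \<in> range_supported (\<Sum>i\<in>I. mscale (trace (E i ** A)) (\<rho> i))"
      using assms(1,2,3) i psd_trace_mult_nonneg
      by (intro psd_combination_summand_range_supported) auto
    then show ?thesis
      by (rule cmat.subspace_scale[OF subspace_range_supported])
  qed
qed

lemma clinear_map_linear: "clinear_map \<phi> \<Longrightarrow> Vector_Spaces.linear mscale mscale \<phi>"
  by (auto simp: clinear_map_def linear_iff_module_hom module_hom_iff cmat.module_axioms)

lemma entanglement_breaking_dim_kernel_bound:
  fixes \<phi> :: "complex^'n^'n \<Rightarrow> complex^'n^'n"
  assumes "entanglement_breaking \<phi>" "psd A"
  shows "CARD('n)^2 \<le> cdim {X. \<phi> X = 0} + (CARD('n) - rank A)^2 + rank (\<phi> A)^2"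
proof -
  obtain I :: "nat set" and \<rho> E where I: "finite I"
    and density: "\<forall>i\<in>I. density (\<rho> i) \<and> psd (E i)"
    and \<phi>: "\<forall>X. \<phi> X = (\<Sum>i\<in>I. mscale (trace (E i ** X)) (\<rho> i))"
    using assms(1) unfolding entanglement_breaking_def by blast
  have psd: "\<And>i. i \<in> I \<Longrightarrow> psd (\<rho> i) \<and> psd (E i)"
    using density by (simp add: density_def)
  have lin: "Vector_Spaces.linear mscale mscale \<phi>"
    using assms(1) by (simp add: entanglement_breaking_def quantum_channel_def clinear_map_linear)
  define V where "V = sesq_annihilator {v. A *v v = 0} {v. A *v v = 0}"
  have "vec.dim {v. A *v v = 0} = CARD('n) - rank A"
    using hermitian_kernel_range_complement(1)[OF psd_hermitian[OF assms(2)]] by simp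
  then have "CARD('n)^2 \<le> cmat.dim V + (CARD('n) - rank A)^2"
    using dim_sesq_annihilator[of "{v. A *v v = 0}" "{v. A *v v = 0}"]
    by (simp add: V_def power2_eq_square)
  moreover have "hermitian (\<phi> A)"
    using psd assms(2) psd_trace_mult_nonneg
    by (auto simp: \<phi> intro!: psd_hermitian psd_nonneg_combination)
  moreover have "\<phi> ` V \<subseteq> range_supported (\<phi> A)"
    using measure_prepare_image_range_supported[OF I psd assms(2)] by (auto simp: \<phi> V_def)
  then have "cmat.dim (\<phi> ` V) \<le> cmat.dim (range_supported (\<phi> A))"
    by (rule cmat.dim_subset)
  moreover have "cmat.dim V \<le> cmat.dim (V \<inter> {X. \<phi> X = 0}) + cmat.dim (\<phi> ` V)"
    by (rule cmat.rank_nullity_le[OF lin]) (simp add: V_def subspace_sesq_annihilator)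
  moreover have "cmat.dim (V \<inter> {X. \<phi> X = 0}) \<le> cdim {X. \<phi> X = 0}"
    unfolding cdim_def by (intro cmat.dim_subset) blast
  ultimately show ?thesis
    using dim_range_supported_le[of "\<phi> A"] by linarith
qed

theorem mainTheorem4:
  fixes \<phi> :: "complex^'n^'n \<Rightarrow> complex^'n^'n"
    and A :: "complex^'n^'n"
  assumes "entanglement_breaking \<phi>"
    and "psd A"
    and "rank A < CARD('n)"
    and "(rank A)^2 + (rank (\<phi> A))^2 < 2 * CARD('n) * rank A"
  shows "int (cdim {X. \<phi> X = 0}) \<ge> 2 * int CARD('n) * int (rank A) - int (rank A)^2 - int (rank (\<phi> A))^2
    \<and> 2 * int CARD('n) * int (rank A) - int (rank A)^2 - int (rank (\<phi> A))^2 > 0"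
proof
  have "int (CARD('n)^2) \<le> int (cdim {X. \<phi> X = 0} + (CARD('n) - rank A)^2 + rank (\<phi> A)^2)"
    using entanglement_breaking_dim_kernel_bound[OF assms(1,2)] by (simp only: of_nat_le_iff)
  moreover have "int (CARD('n) - rank A) = int CARD('n) - int (rank A)"
    using assms(3) by simp
  ultimately have "int CARD('n)^2
      \<le> int (cdim {X. \<phi> X = 0}) + (int CARD('n) - int (rank A))^2 + int (rank (\<phi> A))^2"
    by (simp only: of_nat_add of_nat_power)
  then show "int (cdim {X. \<phi> X = 0}) \<ge> 2 * int CARD('n) * int (rank A) - int (rank A)^2 - int (rank (\<phi> A))^2"
    by (simp add: power2_diff algebra_simps)
  have "int ((rank A)^2 + (rank (\<phi> A))^2) < int (2 * CARD('n) * rank A)"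
    using assms(4) by (simp only: of_nat_less_iff)
  then show "2 * int CARD('n) * int (rank A) - int (rank A)^2 - int (rank (\<phi> A))^2 > 0"
    by simp
qed

end
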